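(* Let $q\ge 2$, $n\ge1$, $d_X\ge1$, $d_Z\ge 1$ be integers, and let $C\subseteq\{0,1,\dots,q-1\}^n$ be a classical code with minimum Hamming distance at least $d_X$ and with $|C|\ge 2V_q(d_Z-1)$. Enumerate $C=\{{\bf c}_1,\dots,{\bf c}_m\}$ and let $A$ be the real matrix with $m$ columns whose rows are: one row of all ones; and, for each ${\bf z}\in\{0,\dots,q-1\}^n$ with $1\le\mathrm{wt}({\bf z})\le d_Z-1$, the two rows with $k$-th entries $\cos(2\pi\,{\bf z}^T{\bf c}_k/q)$ and $\sin(2\pi\,{\bf z}^T{\bf c}_k/q)$. Then $A$ has a nonzero real kernel vector, and for every nonzero ${\bf x}\in\ker(A)\subseteq\mathbb{R}^m$, setting $x_k^+=\max\{x_k,0\}$, $x_k^-=\max\{-x_k,0\}$, $x=\sum_k x_k^+$ and $$|0_L\rangle=\frac{1}{\sqrt{x}}\sum_{k=1}^m\sqrt{x_k^+}\,|{\bf c}_k\rangle,\qquad |1_L\rangle=\frac{1}{\sqrt{x}}\sum_{k=1}^m\sqrt{x_k^-}\,|{\bf c}_k\rangle,$$ the span of $|0_L\rangle,|1_L\rangle$ is a quantum code encoding one logical qubit with bit-flip distance $d_X$ and phase-flip distance $d_Z$; that is, $|0_L\rangle,|1_L\rangle$ are orthonormal, supported on disjoint subsets of $C$, and for every generalized Pauli operator $P=X^{\bf a}Z^{\bf b}$ with $\mathrm{wt}({\bf a})\le d_X-1$ and $\mathrm{wt}({\bf b})\le d_Z-1$ there is a constant $c_P\in\mathbb{C}$ with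 $\langle i_L|P|j_L\rangle=c_P\,\delta_{ij}$ for all $i,j\in\{0,1\}$.
   Context: Let $\omega=e^{2\pi i/q}$. On $\mathbb{C}^q$ with orthonormal basis $|0\rangle,\dots,|q-1\rangle$, $Z=\sum_{j=0}^{q-1}\omega^j|j\rangle\langle j|$ and $X=\sum_{j\in\mathbb{Z}_q}|j\rangle\langle j+1|$ (indices mod $q$). For ${\bf a},{\bf b}\in\{0,\dots,q-1\}^n$, $X^{\bf a}Z^{\bf b}=\bigotimes_{i=1}^n X^{a_i}Z^{b_i}$; $\mathrm{wt}$ denotes Hamming weight. For ${\bf c}\in\{0,\dots,q-1\}^n$, $|{\bf c}\rangle=|c_1\rangle\otimes\cdots\otimes|c_n\rangle$ and ${\bf z}^T{\bf c}=\sum_iz_ic_i$. $V_q(r)=\sum_{w=0}^r\binom{n}{w}(q-1)^w$ is the volume of the $q$-ary Hamming ball of radius $r$. *)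

theory Defs
  imports Complex_Main
begin

text \<open>Words in {0,...,q-1}^n, represented as functions nat => nat that are
  zero outside the index range {0..<n}.\<close>
definition words :: "nat \<Rightarrow> nat \<Rightarrow> (nat \<Rightarrow> nat) set" where
  "words q n = {c. (\<forall>i<n. c i < q) \<and> (\<forall>i\<ge>n. c i = 0)}"

definition wt :: "nat \<Rightarrow> (nat \<Rightarrow> nat) \<Rightarrow> nat" where
  "wt n z = card {i\<in>{0..<n}. z i \<noteq> 0}"

definition hdist :: "nat \<Rightarrow> (nat \<Rightarrow> nat) \<Rightarrow> (nat \<Rightarrow> nat) \<Rightarrow> nat" where
  "hdist n c c' = card {i\<in>{0..<n}. c i \<noteq> c' i}"

definition min_dist_ge :: "nat \<Rightarrow> (nat \<Rightarrow> nat) set \<Rightarrow> nat \<Rightarrow> bool" where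
  "min_dist_ge n C d = (\<forall>c\<in>C. \<forall>c'\<in>C. c \<noteq> c' \<longrightarrow> d \<le> hdist n c c')"

definition Vq :: "nat \<Rightarrow> nat \<Rightarrow> nat \<Rightarrow> nat" where
  "Vq q n r = (\<Sum>w=0..r. (n choose w) * (q - 1) ^ w)"

definition dotp :: "nat \<Rightarrow> (nat \<Rightarrow> nat) \<Rightarrow> (nat \<Rightarrow> nat) \<Rightarrow> nat" where
  "dotp n z c = (\<Sum>i<n. z i * c i)"

text \<open>x (indexed by 0..<m, m = length cs, cs the enumeration of C) lies in the
  kernel of the matrix A: all-ones row, and the cos/sin rows for each z with
  1 <= wt z <= dZ - 1.\<close>
definition in_ker_A :: "nat \<Rightarrow> nat \<Rightarrow> nat \<Rightarrow> (nat \<Rightarrow> nat) list \<Rightarrow> (nat \<Rightarrow> real) \<Rightarrow> bool" where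
  "in_ker_A q n dZ cs x \<longleftrightarrow>
     (\<Sum>k<length cs. x k) = 0 \<and>
     (\<forall>z\<in>words q n. 1 \<le> wt n z \<and> wt n z \<le> dZ - 1 \<longrightarrow>
        (\<Sum>k<length cs. cos (2 * pi * real (dotp n z (cs ! k)) / real q) * x k) = 0 \<and>
        (\<Sum>k<length cs. sin (2 * pi * real (dotp n z (cs ! k)) / real q) * x k) = 0)"

text \<open>States of (C^q)^{\<otimes> n}: functions from basis words to complex amplitudes.\<close>
type_synonym state = "(nat \<Rightarrow> nat) \<Rightarrow> complex"

definition inner_st :: "nat \<Rightarrow> nat \<Rightarrow> state \<Rightarrow> state \<Rightarrow> complex" where
  "inner_st q n \<phi> \<psi> = (\<Sum>w\<in>words q n. cnj (\<phi> w) * \<psi> w)"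

definition xplus :: "(nat \<Rightarrow> real) \<Rightarrow> nat \<Rightarrow> real" where
  "xplus x k = max (x k) 0"

definition xminus :: "(nat \<Rightarrow> real) \<Rightarrow> nat \<Rightarrow> real" where
  "xminus x k = max (- x k) 0"

definition ket0L :: "(nat \<Rightarrow> nat) list \<Rightarrow> (nat \<Rightarrow> real) \<Rightarrow> state" where
  "ket0L cs x = (\<lambda>w. (\<Sum>k<length cs. if cs ! k = w then
      complex_of_real (sqrt (xplus x k) / sqrt (\<Sum>j<length cs. xplus x j)) else 0))"

definition ket1L :: "(nat \<Rightarrow> nat) list \<Rightarrow> (nat \<Rightarrow> real) \<Rightarrow> state" where
  "ket1L cs x = (\<lambda>w. (\<Sum>k<length cs. if cs ! k = w then
      complex_of_real (sqrt (xminus x k) / sqrt (\<Sum>j<length cs. xplus x j)) else 0))"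

text \<open>Single-qudit q x q matrices, as functions on indices {0..<q}.\<close>
definition omega :: "nat \<Rightarrow> complex" where
  "omega q = cis (2 * pi / real q)"

definition Zmat :: "nat \<Rightarrow> nat \<Rightarrow> nat \<Rightarrow> complex" where
  "Zmat q i j = (if i = j then omega q ^ j else 0)"

definition Xmat :: "nat \<Rightarrow> nat \<Rightarrow> nat \<Rightarrow> complex" where
  "Xmat q i j = (if j = (i + 1) mod q then 1 else 0)"

definition mmult :: "nat \<Rightarrow> (nat \<Rightarrow> nat \<Rightarrow> complex) \<Rightarrow> (nat \<Rightarrow> nat \<Rightarrow> complex) \<Rightarrow> nat \<Rightarrow> nat \<Rightarrow> complex" where
  "mmult q A B = (\<lambda>i j. \<Sum>k<q. A i k * B k j)"

fun mpow :: "nat \<Rightarrow> (nat \<Rightarrow> nat \<Rightarrow> complex) \<Rightarrow> nat \<Rightarrow> nat \<Rightarrow> nat \<Rightarrow> complex" where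
  "mpow q A 0 = (\<lambda>i j. if i = j then 1 else 0)"
| "mpow q A (Suc k) = mmult q (mpow q A k) A"

text \<open>Matrix entry <u| X^a Z^b |v> of the tensor product operator.\<close>
definition pauli_entry :: "nat \<Rightarrow> nat \<Rightarrow> (nat \<Rightarrow> nat) \<Rightarrow> (nat \<Rightarrow> nat) \<Rightarrow> (nat \<Rightarrow> nat) \<Rightarrow> (nat \<Rightarrow> nat) \<Rightarrow> complex" where
  "pauli_entry q n a b u v =
     (\<Prod>i<n. mmult q (mpow q (Xmat q) (a i)) (mpow q (Zmat q) (b i)) (u i) (v i))"

definition pauli_mel :: "nat \<Rightarrow> nat \<Rightarrow> (nat \<Rightarrow> nat) \<Rightarrow> (nat \<Rightarrow> nat) \<Rightarrow> state \<Rightarrow> state \<Rightarrow> complex" where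
  "pauli_mel q n a b \<phi> \<psi> =
     (\<Sum>u\<in>words q n. \<Sum>v\<in>words q n. cnj (\<phi> u) * pauli_entry q n a b u v * \<psi> v)"

end

theory Submission
  imports Defs "HOL-Library.FuncSet"
begin

text \<open>
  The matrix A has one all-ones row and two rows for each of the fewer than V_q(d_Z - 1)
  nonzero words of weight below d_Z, hence fewer rows than its |C| columns, so it has a nonzero
  kernel vector x. The all-ones row gives x^+ and x^- the same mass, so |0_L> and |1_L> are unit
  vectors; they are orthogonal because their supports are disjoint. An operator X^a Z^b with
  a nonzero shifts every codeword by a word of weight below d_X, hence off C, so all its logical
  matrix elements vanish. For a = 0 it is diagonal with entries omega^(b.u): the off-diagonal
  logical elements vanish by disjointness, and
  <0_L|Z^b|0_L> - <1_L|Z^b|1_L> = (1/x) sum_k x_k omega^(b.c_k), whose real and imaginary parts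
  are the cos and sin rows of A for b applied to x.
\<close>

lemma homogeneous_system_nontrivial_solution:
  fixes eqs :: "('i \<Rightarrow> 'a::field) list" and K :: "'i set"
  assumes "finite K" and "length eqs < card K"
  shows "\<exists>x. (\<exists>k\<in>K. x k \<noteq> 0) \<and> (\<forall>e\<in>set eqs. (\<Sum>k\<in>K. e k * x k) = 0)"
  using assms
proof (induction "length eqs" arbitrary: eqs K)
  case 0
  then obtain k where "k \<in> K" by fastforce
  with 0 show ?case by (intro exI[of _ "\<lambda>j. if j = k then 1 else 0"]) auto
next
  case (Suc N)
  then obtain e es where eqs: "eqs = e # es" and len: "length es = N" by (cases eqs) auto
  show ?case
  proof (cases "\<forall>k\<in>K. e k = 0")
    case True
    with Suc.hyps(1)[OF len[symmetric]] Suc.prems eqs show ?thesis by auto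
  next
    case False
    then obtain k0 where k0: "k0 \<in> K" "e k0 \<noteq> 0" by auto
    \<comment> \<open>eliminate the unknown at k0 using e, then back-substitute\<close>
    define K' where "K' = K - {k0}"
    define es' where "es' = map (\<lambda>f k. f k - f k0 / e k0 * e k) es"
    have "finite K'" "length es' < card K'"
      using Suc.prems k0 len eqs by (auto simp: K'_def es'_def)
    with Suc.hyps(1)[of es' K'] len obtain y where
      y: "\<exists>k\<in>K'. y k \<noteq> 0" "\<forall>f\<in>set es'. (\<Sum>k\<in>K'. f k * y k) = 0"
      by (auto simp: es'_def)
    define x where "x = y(k0 := - (\<Sum>k\<in>K'. e k * y k) / e k0)"
    have split: "(\<Sum>k\<in>K. f k * x k) = f k0 * x k0 + (\<Sum>k\<in>K'. f k * y k)" for f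
    proof -
      have "(\<Sum>k\<in>K. f k * x k) = f k0 * x k0 + (\<Sum>k\<in>K'. f k * x k)"
        using k0 Suc.prems(1) by (simp add: K'_def sum.remove)
      also have "(\<Sum>k\<in>K'. f k * x k) = (\<Sum>k\<in>K'. f k * y k)"
        by (intro sum.cong) (auto simp: x_def K'_def)
      finally show ?thesis .
    qed
    have "(\<Sum>k\<in>K. f k * x k) = 0" if "f \<in> set es" for f
    proof -
      have "(\<Sum>k\<in>K'. (f k - f k0 / e k0 * e k) * y k) = 0"
        using y(2) that by (auto simp: es'_def)
      then have "(\<Sum>k\<in>K'. f k * y k) = f k0 / e k0 * (\<Sum>k\<in>K'. e k * y k)"
        by (simp add: algebra_simps sum_subtractf sum_distrib_left)
      with k0 show ?thesis unfolding split by (simp add: x_def field_simps)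
    qed
    moreover have "(\<Sum>k\<in>K. e k * x k) = 0"
      using k0 unfolding split by (simp add: x_def)
    moreover have "\<exists>k\<in>K. x k \<noteq> 0"
      using y(1) by (auto simp: x_def K'_def)
    ultimately show ?thesis using eqs by auto
  qed
qed

definition supp :: "nat \<Rightarrow> (nat \<Rightarrow> nat) \<Rightarrow> nat set" where
  "supp n z = {i\<in>{0..<n}. z i \<noteq> 0}"

lemma wt_eq_card_supp: "wt n z = card (supp n z)"
  by (simp add: wt_def supp_def)

lemma finite_words: "finite (words q n)"
  by (rule finite_subset[OF _ finite_set_of_finite_funs[of "{..<n}" "{..<q}" 0]])
    (auto simp: words_def not_less)

lemma words_eq_0_outside_supp: "z \<in> words q n \<Longrightarrow> i \<notin> supp n z \<Longrightarrow> z i = 0"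
  by (cases "i < n") (auto simp: words_def supp_def)

lemma words_eqI:
  assumes "u \<in> words q n" "v \<in> words q n" "\<forall>i<n. u i = v i"
  shows "u = v"
proof
  fix i
  show "u i = v i"
    using assms by (cases "i < n") (auto simp: words_def)
qed

lemma card_words_with_supp:
  assumes "finite S"
  shows "card {z\<in>words q n. supp n z = S} \<le> (q - 1) ^ card S"
proof -
  have "inj_on (\<lambda>z. restrict z S) {z\<in>words q n. supp n z = S}"
  proof (rule inj_onI, rule ext)
    fix z z' i
    assume z: "z \<in> {z\<in>words q n. supp n z = S}" and z': "z' \<in> {z\<in>words q n. supp n z = S}"
      and eq: "restrict z S = restrict z' S"
    show "z i = z' i"
    proof (cases "i \<in> S")
      case True
      then show ?thesis using fun_cong[OF eq, of i] by simp
    next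
      case False
      with z z' show ?thesis by (metis (mono_tags) mem_Collect_eq words_eq_0_outside_supp)
    qed
  qed
  moreover have "(\<lambda>z. restrict z S) ` {z\<in>words q n. supp n z = S} \<subseteq> S \<rightarrow>\<^sub>E {1..<q}"
    by (auto simp: words_def supp_def)
  ultimately have "card {z\<in>words q n. supp n z = S} \<le> card (S \<rightarrow>\<^sub>E {1..<q})"
    using assms by (intro card_inj_on_le) (auto intro: finite_PiE)
  also have "\<dots> = (q - 1) ^ card S"
    using assms by (simp add: card_PiE)
  finally show ?thesis .
qed

lemma card_words_wt_eq_le: "card {z\<in>words q n. wt n z = w} \<le> (n choose w) * (q - 1) ^ w"
proof -
  let ?Ss = "{S. S \<subseteq> {0..<n} \<and> card S = w}"
  have "{z\<in>words q n. wt n z = w} = (\<Union>S\<in>?Ss. {z\<in>words q n. supp n z = S})"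
    by (auto simp: wt_eq_card_supp supp_def)
  then have "card {z\<in>words q n. wt n z = w} \<le> (\<Sum>S\<in>?Ss. card {z\<in>words q n. supp n z = S})"
    by (simp add: card_UN_le)
  also have "\<dots> \<le> (\<Sum>S\<in>?Ss. (q - 1) ^ w)"
    by (intro sum_mono) (auto dest: card_words_with_supp[OF finite_subset])
  also have "\<dots> = (n choose w) * (q - 1) ^ w"
    using n_subsets[of "{0..<n}" w] by simp
  finally show ?thesis .
qed

lemma card_hamming_ball_le: "card {z\<in>words q n. wt n z \<le> r} \<le> Vq q n r"
proof -
  have "{z\<in>words q n. wt n z \<le> r} = (\<Union>w\<in>{0..r}. {z\<in>words q n. wt n z = w})"
    by auto
  then have "card {z\<in>words q n. wt n z \<le> r} \<le> (\<Sum>w=0..r. card {z\<in>words q n. wt n z = w})"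
    by (simp add: card_UN_le)
  also have "\<dots> \<le> Vq q n r"
    unfolding Vq_def by (intro sum_mono card_words_wt_eq_le)
  finally show ?thesis .
qed

lemma mpow_Xmat: "i < q \<Longrightarrow> mpow q (Xmat q) a i j = (if j = (i + a) mod q then 1 else 0)"
proof (induction a arbitrary: j)
  case 0
  then show ?case by simp
next
  case (Suc a)
  have "mpow q (Xmat q) (Suc a) i j = (\<Sum>k<q. (if k = (i + a) mod q then Xmat q k j else 0))"
    by (simp add: mmult_def Suc.IH[OF Suc.prems] if_distrib if_distribR cong: if_cong)
  also have "\<dots> = Xmat q ((i + a) mod q) j"
    using Suc.prems by simp
  also have "\<dots> = (if j = (i + Suc a) mod q then 1 else 0)"
    by (simp add: Xmat_def mod_Suc_eq)
  finally show ?case .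
qed

lemma mpow_Zmat: "i < q \<Longrightarrow> mpow q (Zmat q) b i j = (if i = j then omega q ^ (b * j) else 0)"
proof (induction b arbitrary: j)
  case 0
  then show ?case by simp
next
  case (Suc b)
  have "mpow q (Zmat q) (Suc b) i j = (\<Sum>k<q. (if i = k then omega q ^ (b * k) * Zmat q k j else 0))"
    by (simp add: mmult_def Suc.IH[OF Suc.prems] if_distrib if_distribR cong: if_cong)
  also have "\<dots> = omega q ^ (b * i) * Zmat q i j"
    using Suc.prems by simp
  also have "\<dots> = (if i = j then omega q ^ (Suc b * j) else 0)"
    by (simp add: Zmat_def power_add)
  finally show ?case .
qed

lemma pauli_factor_eq:
  assumes "u < q" "v < q"
  shows "mmult q (mpow q (Xmat q) a) (mpow q (Zmat q) b) u v =
    (if v = (u + a) mod q then omega q ^ (b * v) else 0)"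
proof -
  have "mmult q (mpow q (Xmat q) a) (mpow q (Zmat q) b) u v =
      (\<Sum>k<q. if k = (u + a) mod q then (if k = v then omega q ^ (b * v) else 0) else 0)"
    using assms by (simp add: mmult_def mpow_Xmat mpow_Zmat if_distrib cong: if_cong)
  then show ?thesis
    using assms by simp
qed

lemma pauli_entry_eq:
  assumes "u \<in> words q n" "v \<in> words q n"
  shows "pauli_entry q n a b u v =
    (if \<forall>i<n. v i = (u i + a i) mod q then omega q ^ dotp n b v else 0)"
proof -
  have "pauli_entry q n a b u v =
      (\<Prod>i<n. if v i = (u i + a i) mod q then omega q ^ (b i * v i) else 0)"
    unfolding pauli_entry_def using assms by (intro prod.cong) (auto simp: words_def pauli_factor_eq)
  then show ?thesis
    by (auto simp: dotp_def power_sum intro: prod_zero)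
qed

lemma add_mod_eq_self_iff:
  fixes u a q :: nat
  assumes "u < q" "a < q"
  shows "(u + a) mod q = u \<longleftrightarrow> a = 0"
proof
  assume eq: "(u + a) mod q = u"
  show "a = 0"
  proof (cases "u + a < q")
    case True
    with eq show ?thesis by simp
  next
    case False
    then have "(u + a) mod q = u + a - q"
      using assms by (simp add: le_mod_geq)
    with eq assms False show ?thesis by linarith
  qed
qed (use assms in simp)

lemma hdist_shift_eq_wt:
  assumes "u \<in> words q n" "a \<in> words q n" "\<forall>i<n. v i = (u i + a i) mod q"
  shows "hdist n u v = wt n a"
proof -
  have "u i \<noteq> v i \<longleftrightarrow> a i \<noteq> 0" if "i < n" for i
    using assms that add_mod_eq_self_iff[of "u i" q "a i"] by (auto simp: words_def)
  then show ?thesis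
    unfolding hdist_def wt_def by (metis (lifting) atLeastLessThan_iff)
qed

lemma pauli_mel_eq_0_if_shift_below_distance:
  assumes "min_dist_ge n C d" "a \<in> words q n" "1 \<le> wt n a" "wt n a < d"
    and "{w. \<phi> w \<noteq> 0} \<subseteq> C" "{w. \<psi> w \<noteq> 0} \<subseteq> C"
  shows "pauli_mel q n a b \<phi> \<psi> = 0"
  unfolding pauli_mel_def
proof (intro sum.neutral ballI)
  fix u v assume u: "u \<in> words q n" and v: "v \<in> words q n"
  show "cnj (\<phi> u) * pauli_entry q n a b u v * \<psi> v = 0"
  proof (rule ccontr)
    assume "cnj (\<phi> u) * pauli_entry q n a b u v * \<psi> v \<noteq> 0"
    then have "u \<in> C" "v \<in> C" and shift: "\<forall>i<n. v i = (u i + a i) mod q"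
      using assms(5,6) pauli_entry_eq[OF u v] by (auto split: if_splits)
    have "hdist n u v = wt n a"
      using hdist_shift_eq_wt[OF u assms(2) shift] .
    then have "u \<noteq> v"
      using assms(3) by (auto simp: hdist_def)
    then have "d \<le> hdist n u v"
      using assms(1) \<open>u \<in> C\<close> \<open>v \<in> C\<close> unfolding min_dist_ge_def by blast
    with \<open>hdist n u v = wt n a\<close> assms(4) show False by linarith
  qed
qed

definition diag_mel :: "nat \<Rightarrow> nat \<Rightarrow> ((nat \<Rightarrow> nat) \<Rightarrow> complex) \<Rightarrow> state \<Rightarrow> state \<Rightarrow> complex" where
  "diag_mel q n h \<phi> \<psi> = (\<Sum>u\<in>words q n. cnj (\<phi> u) * h u * \<psi> u)"

lemma inner_st_eq_diag_mel: "inner_st q n \<phi> \<psi> = diag_mel q n (\<lambda>_. 1) \<phi> \<psi>"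
  by (simp add: inner_st_def diag_mel_def)

lemma pauli_mel_eq_diag_mel:
  assumes "\<forall>i<n. a i = 0"
  shows "pauli_mel q n a b \<phi> \<psi> = diag_mel q n (\<lambda>u. omega q ^ dotp n b u) \<phi> \<psi>"
  unfolding pauli_mel_def diag_mel_def
proof (rule sum.cong[OF refl])
  fix u assume u: "u \<in> words q n"
  have entry: "pauli_entry q n a b u v = (if v = u then omega q ^ dotp n b u else 0)"
    if v: "v \<in> words q n" for v
  proof -
    have "(\<forall>i<n. v i = (u i + a i) mod q) \<longleftrightarrow> (\<forall>i<n. v i = u i)"
      using u assms by (auto simp: words_def)
    also have "\<dots> \<longleftrightarrow> v = u"
      using words_eqI[OF v u] by auto
    finally show ?thesis
      using pauli_entry_eq[OF u v] by auto
  qed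
  have "(\<Sum>v\<in>words q n. cnj (\<phi> u) * pauli_entry q n a b u v * \<psi> v) =
      (\<Sum>v\<in>words q n. if v = u then cnj (\<phi> u) * omega q ^ dotp n b u * \<psi> u else 0)"
    by (rule sum.cong) (simp_all add: entry)
  also have "\<dots> = cnj (\<phi> u) * omega q ^ dotp n b u * \<psi> u"
    using u finite_words by simp
  finally show "(\<Sum>v\<in>words q n. cnj (\<phi> u) * pauli_entry q n a b u v * \<psi> v) =
      cnj (\<phi> u) * omega q ^ dotp n b u * \<psi> u" .
qed

definition ket_of :: "(nat \<Rightarrow> nat) list \<Rightarrow> (nat \<Rightarrow> complex) \<Rightarrow> state" where
  "ket_of cs f = (\<lambda>w. \<Sum>k<length cs. if cs ! k = w then f k else 0)"

lemma ket_of_nth: "distinct cs \<Longrightarrow> k < length cs \<Longrightarrow> ket_of cs f (cs ! k) = f k"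
  by (simp add: ket_of_def nth_eq_iff_index_eq if_distrib cong: if_cong)

lemma ket_of_notin: "w \<notin> set cs \<Longrightarrow> ket_of cs f w = 0"
  by (auto simp: ket_of_def intro!: sum.neutral)

lemma diag_mel_ket_of:
  assumes "distinct cs" "set cs \<subseteq> words q n"
  shows "diag_mel q n h (ket_of cs f) (ket_of cs g) = (\<Sum>k<length cs. cnj (f k) * h (cs ! k) * g k)"
proof -
  have "diag_mel q n h (ket_of cs f) (ket_of cs g) =
      (\<Sum>u\<in>set cs. cnj (ket_of cs f u) * h u * ket_of cs g u)"
    unfolding diag_mel_def using assms(2)
    by (intro sum.mono_neutral_right finite_words) (auto simp: ket_of_notin)
  also have "\<dots> = (\<Sum>k<length cs. cnj (ket_of cs f (cs ! k)) * h (cs ! k) * ket_of cs g (cs ! k))"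
    using bij_betw_nth[OF assms(1) refl refl] by (rule sum.reindex_bij_betw[symmetric])
  also have "\<dots> = (\<Sum>k<length cs. cnj (f k) * h (cs ! k) * g k)"
    using assms(1) by (simp add: ket_of_nth)
  finally show ?thesis .
qed

lemma ket0L_eq_ket_of:
  "ket0L cs x = ket_of cs (\<lambda>k. complex_of_real (sqrt (xplus x k) / sqrt (\<Sum>j<length cs. xplus x j)))"
  unfolding ket0L_def ket_of_def ..

lemma ket1L_eq_ket_of:
  "ket1L cs x = ket_of cs (\<lambda>k. complex_of_real (sqrt (xminus x k) / sqrt (\<Sum>j<length cs. xplus x j)))"
  unfolding ket1L_def ket_of_def ..

lemma cnj_sqrt_mult_sqrt:
  assumes "0 \<le> p" "0 \<le> r" "0 \<le> s"
  shows "cnj (complex_of_real (sqrt p / sqrt s)) * h * complex_of_real (sqrt r / sqrt s) =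
    complex_of_real (sqrt (p * r) / s) * h"
  using assms by (simp add: real_sqrt_mult flip: of_real_mult)

lemma xplus_nonneg [simp]: "0 \<le> xplus x k"
  by (simp add: xplus_def)

lemma xminus_nonneg [simp]: "0 \<le> xminus x k"
  by (simp add: xminus_def)

lemma xplus_diff_xminus: "xplus x k - xminus x k = x k"
  by (simp add: xplus_def xminus_def)

lemma xplus_add_xminus: "xplus x k + xminus x k = \<bar>x k\<bar>"
  by (simp add: xplus_def xminus_def)

lemma xplus_mult_xminus: "xplus x k * xminus x k = 0"
  by (simp add: xplus_def xminus_def max_def)

lemma xminus_mult_xplus: "xminus x k * xplus x k = 0"
  by (simp add: xplus_def xminus_def max_def)

lemma sum_xminus_eq_sum_xplus:
  assumes "(\<Sum>k<m. x k) = 0"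
  shows "(\<Sum>k<m. xminus x k) = (\<Sum>k<m. xplus x k)"
proof -
  have "(\<Sum>k<m. x k) = (\<Sum>k<m. xplus x k) - (\<Sum>k<m. xminus x k)"
    by (simp add: xplus_diff_xminus flip: sum_subtractf)
  with assms show ?thesis
    by simp
qed

lemma sum_xplus_pos:
  assumes "(\<Sum>k<m. x k) = 0" "\<exists>k<m. x k \<noteq> 0"
  shows "0 < (\<Sum>k<m. xplus x k)"
proof -
  have "0 < (\<Sum>k<m. \<bar>x k\<bar>)"
    using assms(2) by (auto intro: sum_pos2)
  also have "\<dots> = (\<Sum>k<m. xplus x k) + (\<Sum>k<m. xminus x k)"
    by (simp add: xplus_add_xminus flip: sum.distrib)
  finally show ?thesis
    using sum_xminus_eq_sum_xplus[OF assms(1)] by simp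
qed

lemma diag_mel_logical_states:
  fixes x :: "nat \<Rightarrow> real" and cs :: "(nat \<Rightarrow> nat) list"
  assumes "distinct cs" "set cs \<subseteq> words q n"
  defines "s \<equiv> \<Sum>j<length cs. xplus x j"
  shows "diag_mel q n h (ket0L cs x) (ket0L cs x) =
      (\<Sum>k<length cs. complex_of_real (xplus x k / s) * h (cs ! k))"
    and "diag_mel q n h (ket1L cs x) (ket1L cs x) =
      (\<Sum>k<length cs. complex_of_real (xminus x k / s) * h (cs ! k))"
    and "diag_mel q n h (ket0L cs x) (ket1L cs x) = 0"
    and "diag_mel q n h (ket1L cs x) (ket0L cs x) = 0"
proof -
  have "0 \<le> s"
    by (simp add: s_def sum_nonneg)
  note amplitudes = cnj_sqrt_mult_sqrt[OF _ _ this]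
  show "diag_mel q n h (ket0L cs x) (ket0L cs x) =
      (\<Sum>k<length cs. complex_of_real (xplus x k / s) * h (cs ! k))"
    and "diag_mel q n h (ket1L cs x) (ket1L cs x) =
      (\<Sum>k<length cs. complex_of_real (xminus x k / s) * h (cs ! k))"
    and "diag_mel q n h (ket0L cs x) (ket1L cs x) = 0"
    and "diag_mel q n h (ket1L cs x) (ket0L cs x) = 0"
    unfolding ket0L_eq_ket_of ket1L_eq_ket_of diag_mel_ket_of[OF assms(1,2)] s_def[symmetric]
    by (simp_all only: amplitudes xplus_nonneg xminus_nonneg)
      (simp_all add: xplus_mult_xminus xminus_mult_xplus)
qed

lemma diag_mel_ket0L_eq_ket1L:
  assumes "distinct cs" "set cs \<subseteq> words q n"
    and "(\<Sum>k<length cs. complex_of_real (x k) * h (cs ! k)) = 0"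
  shows "diag_mel q n h (ket0L cs x) (ket0L cs x) = diag_mel q n h (ket1L cs x) (ket1L cs x)"
proof -
  let ?s = "\<Sum>j<length cs. xplus x j"
  have "diag_mel q n h (ket0L cs x) (ket0L cs x) - diag_mel q n h (ket1L cs x) (ket1L cs x) =
      (\<Sum>k<length cs. complex_of_real ((xplus x k - xminus x k) / ?s) * h (cs ! k))"
    unfolding diag_mel_logical_states[OF assms(1,2)]
    by (simp add: diff_divide_distrib algebra_simps flip: sum_subtractf)
  also have "\<dots> = complex_of_real (1 / ?s) * (\<Sum>k<length cs. complex_of_real (x k) * h (cs ! k))"
    by (simp add: xplus_diff_xminus sum_distrib_left mult.assoc)
  finally show ?thesis
    using assms(3) by simp
qed

lemma logical_states_orthonormal:
  assumes "distinct cs" "set cs \<subseteq> words q n"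
    and "(\<Sum>k<length cs. x k) = 0" "\<exists>k<length cs. x k \<noteq> 0"
  shows "inner_st q n (ket0L cs x) (ket0L cs x) = 1"
    and "inner_st q n (ket1L cs x) (ket1L cs x) = 1"
    and "inner_st q n (ket0L cs x) (ket1L cs x) = 0"
proof -
  have "(\<Sum>k<length cs. complex_of_real (xplus x k / (\<Sum>j<length cs. xplus x j)) * 1) = 1"
    using sum_xplus_pos[OF assms(3,4)] by (simp flip: of_real_sum sum_divide_distrib)
  then show ket0: "inner_st q n (ket0L cs x) (ket0L cs x) = 1"
    by (simp only: inner_st_eq_diag_mel diag_mel_logical_states[OF assms(1,2)])
  have "(\<Sum>k<length cs. complex_of_real (x k) * 1) = 0"
    using assms(3) by (simp flip: of_real_sum)
  with ket0 show "inner_st q n (ket1L cs x) (ket1L cs x) = 1"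
    by (simp add: inner_st_eq_diag_mel diag_mel_ket0L_eq_ket1L[OF assms(1,2)])
  show "inner_st q n (ket0L cs x) (ket1L cs x) = 0"
    by (simp add: inner_st_eq_diag_mel diag_mel_logical_states[OF assms(1,2)])
qed

lemma logical_states_supports:
  assumes "distinct cs"
  shows "{w. ket0L cs x w \<noteq> 0} \<subseteq> set cs"
    and "{w. ket1L cs x w \<noteq> 0} \<subseteq> set cs"
    and "{w. ket0L cs x w \<noteq> 0} \<inter> {w. ket1L cs x w \<noteq> 0} = {}"
proof -
  show sub0: "{w. ket0L cs x w \<noteq> 0} \<subseteq> set cs" and "{w. ket1L cs x w \<noteq> 0} \<subseteq> set cs"
    unfolding ket0L_eq_ket_of ket1L_eq_ket_of using ket_of_notin by blast+
  have "ket0L cs x (cs ! k) = 0 \<or> ket1L cs x (cs ! k) = 0" if "k < length cs" for k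
    using xplus_mult_xminus[of x k] that assms
    by (auto simp: ket0L_eq_ket_of ket1L_eq_ket_of ket_of_nth)
  with sub0 show "{w. ket0L cs x w \<noteq> 0} \<inter> {w. ket1L cs x w \<noteq> 0} = {}"
    by (force simp: in_set_conv_nth)
qed

lemma ex_nonzero_in_ker_A:
  assumes "0 < q" and "2 * Vq q n (dZ - 1) \<le> length cs"
  shows "\<exists>x. (\<exists>k<length cs. x k \<noteq> 0) \<and> in_ker_A q n dZ cs x"
proof -
  define Z where "Z = {z\<in>words q n. 1 \<le> wt n z \<and> wt n z \<le> dZ - 1}"
  define row where "row f z k = f (2 * pi * real (dotp n z (cs ! k)) / real q)"
    for f :: "real \<Rightarrow> real" and z k
  define E where "E = insert (\<lambda>_. 1) (row cos ` Z \<union> row sin ` Z)"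
  have "finite Z"
    by (simp add: Z_def finite_words)
  have "(\<lambda>_. 0) \<notin> Z"
    by (simp add: Z_def wt_def)
  then have "Suc (card Z) = card (insert (\<lambda>_. 0) Z)"
    using \<open>finite Z\<close> by simp
  also have "\<dots> \<le> card {z\<in>words q n. wt n z \<le> dZ - 1}"
    using assms(1) by (intro card_mono) (simp add: finite_words, auto simp: Z_def words_def wt_def)
  also have "\<dots> \<le> Vq q n (dZ - 1)"
    by (rule card_hamming_ball_le)
  finally have "Suc (card Z) \<le> Vq q n (dZ - 1)" .
  have "card E \<le> Suc (card (row cos ` Z \<union> row sin ` Z))"
    using \<open>finite Z\<close> by (simp add: E_def card_insert_if)
  also have "\<dots> \<le> Suc (card (row cos ` Z) + card (row sin ` Z))"
    by (simp add: card_Un_le)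
  also have "\<dots> \<le> Suc (card Z + card Z)"
    using card_image_le[OF \<open>finite Z\<close>] by (intro Suc_le_mono[THEN iffD2] add_mono)
  finally have "card E < length cs"
    using \<open>Suc (card Z) \<le> Vq q n (dZ - 1)\<close> assms(2) by linarith
  obtain es where es: "set es = E" "distinct es"
    using finite_distinct_list[of E] \<open>finite Z\<close> by (auto simp: E_def)
  with \<open>card E < length cs\<close> have "length es < card {..<length cs}"
    by (simp add: distinct_card[symmetric])
  then obtain x where "\<exists>k<length cs. x k \<noteq> 0"
    and x: "\<forall>e\<in>E. (\<Sum>k<length cs. e k * x k) = 0"
    using homogeneous_system_nontrivial_solution[of "{..<length cs}" es] es(1) by auto
  moreover have "in_ker_A q n dZ cs x"
  proof -
    have "(\<Sum>k<length cs. x k) = 0"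
      using x by (simp add: E_def)
    moreover have "(\<Sum>k<length cs. row f z k * x k) = 0" if "z \<in> Z" "f \<in> {cos, sin}" for z f
      using x that by (auto simp: E_def)
    ultimately show ?thesis
      unfolding in_ker_A_def by (simp add: Z_def row_def)
  qed
  ultimately show ?thesis
    by blast
qed

lemma omega_power: "omega q ^ d = cis (2 * pi * real d / real q)"
  unfolding omega_def DeMoivre by (simp add: field_simps)

lemma in_ker_A_sum_omega_power:
  assumes "in_ker_A q n dZ cs x" "b \<in> words q n" "wt n b \<le> dZ - 1"
  shows "(\<Sum>k<length cs. complex_of_real (x k) * omega q ^ dotp n b (cs ! k)) = 0"
proof (cases "wt n b = 0")
  case True
  then have "dotp n b w = 0" for w
    by (simp add: wt_def dotp_def)
  with assms(1) show ?thesis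
    by (simp add: in_ker_A_def flip: of_real_sum)
next
  case False
  with assms show ?thesis
    by (auto simp: in_ker_A_def complex_eq_iff omega_power mult.commute)
qed

lemma ex_scalar_matrix_2:
  fixes F :: "'s \<Rightarrow> 's \<Rightarrow> 'a::ring_1"
  assumes "F \<phi>0 \<phi>1 = 0" "F \<phi>1 \<phi>0 = 0" "F \<phi>0 \<phi>0 = F \<phi>1 \<phi>1"
  shows "\<exists>c. \<forall>i\<in>{0::nat,1}. \<forall>j\<in>{0::nat,1}.
    F (if i = 0 then \<phi>0 else \<phi>1) (if j = 0 then \<phi>0 else \<phi>1) = c * (if i = j then 1 else 0)"
  using assms by (intro exI[of _ "F \<phi>0 \<phi>0"]) auto

lemma logical_pauli_mel_scalar:
  assumes "distinct cs" "set cs \<subseteq> words q n" "min_dist_ge n (set cs) dX"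
    and "in_ker_A q n dZ cs x"
    and "a \<in> words q n" "b \<in> words q n" "wt n a \<le> dX - 1" "wt n b \<le> dZ - 1"
  shows "\<exists>cP::complex. \<forall>i\<in>{0::nat,1}. \<forall>j\<in>{0::nat,1}.
    pauli_mel q n a b (if i = 0 then ket0L cs x else ket1L cs x)
                      (if j = 0 then ket0L cs x else ket1L cs x)
    = cP * (if i = j then 1 else 0)"
proof (cases "wt n a = 0")
  case True
  then have "\<forall>i<n. a i = 0"
    by (simp add: wt_def)
  let ?h = "\<lambda>u. omega q ^ dotp n b u"
  have "(\<Sum>k<length cs. complex_of_real (x k) * ?h (cs ! k)) = 0"
    using in_ker_A_sum_omega_power[OF assms(4,6,8)] .
  then have "diag_mel q n ?h (ket0L cs x) (ket0L cs x) = diag_mel q n ?h (ket1L cs x) (ket1L cs x)"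
    by (rule diag_mel_ket0L_eq_ket1L[OF assms(1,2)])
  then show ?thesis
    unfolding pauli_mel_eq_diag_mel[OF \<open>\<forall>i<n. a i = 0\<close>]
    by (rule ex_scalar_matrix_2[where F = "diag_mel q n ?h",
          OF diag_mel_logical_states(3,4)[OF assms(1,2)]])
next
  case False
  then have "pauli_mel q n a b \<phi> \<psi> = 0" if "\<phi> \<in> {ket0L cs x, ket1L cs x}" "\<psi> \<in> {ket0L cs x, ket1L cs x}"
    for \<phi> \<psi>
    using pauli_mel_eq_0_if_shift_below_distance[OF assms(3,5)] assms(7)
      logical_states_supports(1,2)[OF assms(1)] that
    by auto
  then show ?thesis
    by (intro ex_scalar_matrix_2[where F = "pauli_mel q n a b"]) auto
qed

theorem lemma2:
  fixes q n dX dZ :: nat and C :: "(nat \<Rightarrow> nat) set" and cs :: "(nat \<Rightarrow> nat) list"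
  assumes "q \<ge> 2" and "n \<ge> 1" and "dX \<ge> 1" and "dZ \<ge> 1"
    and "C \<subseteq> words q n"
    and "min_dist_ge n C dX"
    and "card C \<ge> 2 * Vq q n (dZ - 1)"
    and "distinct cs" and "set cs = C"
  shows "(\<exists>x. (\<exists>k<length cs. x k \<noteq> 0) \<and> in_ker_A q n dZ cs x) \<and>
    (\<forall>x. (\<exists>k<length cs. x k \<noteq> 0) \<and> in_ker_A q n dZ cs x \<longrightarrow>
      inner_st q n (ket0L cs x) (ket0L cs x) = 1 \<and>
      inner_st q n (ket1L cs x) (ket1L cs x) = 1 \<and>
      inner_st q n (ket0L cs x) (ket1L cs x) = 0 \<and>
      {w. ket0L cs x w \<noteq> 0} \<subseteq> C \<and> {w. ket1L cs x w \<noteq> 0} \<subseteq> C \<and>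
      {w. ket0L cs x w \<noteq> 0} \<inter> {w. ket1L cs x w \<noteq> 0} = {} \<and>
      (\<forall>a\<in>words q n. \<forall>b\<in>words q n. wt n a \<le> dX - 1 \<and> wt n b \<le> dZ - 1 \<longrightarrow>
         (\<exists>cP::complex. \<forall>i\<in>{0::nat,1}. \<forall>j\<in>{0::nat,1}.
            pauli_mel q n a b (if i = 0 then ket0L cs x else ket1L cs x)
                              (if j = 0 then ket0L cs x else ket1L cs x)
            = cP * (if i = j then 1 else 0))))"
proof -
  have CW: "set cs \<subseteq> words q n" and md: "min_dist_ge n (set cs) dX"
    using assms(5,6,9) by simp_all
  have "2 * Vq q n (dZ - 1) \<le> length cs"
    using assms(7-9) distinct_card by metis
  then have "\<exists>x. (\<exists>k<length cs. x k \<noteq> 0) \<and> in_ker_A q n dZ cs x"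
    using assms(1) by (intro ex_nonzero_in_ker_A) simp_all
  moreover have "(\<Sum>k<length cs. x k) = 0" if "in_ker_A q n dZ cs x" for x
    using that by (simp add: in_ker_A_def)
  ultimately show ?thesis
    using logical_states_orthonormal[OF assms(8) CW] logical_states_supports[OF assms(8)]
      logical_pauli_mel_scalar[OF assms(8) CW md] assms(9)
    by auto
qed

end
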